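(* For every integer $n\ge 3$, the corona $C_n\odot 3K_1$ admits a signed product cordial labeling.
   Context: A graph $G$ is signed product cordial if there is a vertex labeling $\alpha: V(G)\to\{1,-1\}$ such that, with the induced edge labeling $\alpha^*(uv)=\alpha(u)\alpha(v)$, we have $|v_\alpha(-1)-v_\alpha(1)|\le 1$ and $|e_{\alpha^*}(-1)-e_{\alpha^*}(1)|\le 1$. Here $v_\alpha(x)$ is the number of vertices labeled $x$ and $e_{\alpha^*}(x)$ is the number of edges labeled $x$; such an $\alpha$ is called a signed product cordial labeling. The corona $G_1\odot G_2$ of graphs $G_1$ (with $n_1$ vertices) and $G_2$ is obtained by taking one copy of $G_1$ and $n_1$ copies of $G_2$, and joining the $i$-th vertex of $G_1$ by an edge to every vertex of the $i$-th copy of $G_2$. Here $C_n$ is the cycle on $n$ vertices and $3K_1$ is the edgeless graph on $3$ vertices. So $C_n\odot 3K_1$ is the cycle $u_1\cdots u_n$ with three pendant vertices $v_x,w_x,t_x$ attached to each $u_x$. *)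

theory Defs
  imports Main
begin

text \<open>A (simple, finite) graph is a pair (V, E) of a vertex set and a set of
  edges, each edge being a 2-element subset of V.\<close>
type_synonym 'a graph = "'a set \<times> 'a set set"

definition verts :: "'a graph \<Rightarrow> 'a set" where "verts G = fst G"
definition edges :: "'a graph \<Rightarrow> 'a set set" where "edges G = snd G"

definition cycle_graph :: "nat \<Rightarrow> nat graph" where
  "cycle_graph n = ({0..<n}, {{i, (i + 1) mod n} | i. i < n})"

definition empty_graph :: "nat \<Rightarrow> nat graph" where
  "empty_graph m = ({0..<m}, {})"

text \<open>Corona G1 \<odot> G2: one copy of G1 (tagged Inl), and for each vertex v of G1
  a copy of G2 (vertices Inr (v, w)), with v joined to every vertex of its copy.\<close>
definition corona :: "'a graph \<Rightarrow> 'b graph \<Rightarrow> ('a + 'a \<times> 'b) graph" where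
  "corona G1 G2 =
     (Inl ` verts G1 \<union> {Inr (v, w) | v w. v \<in> verts G1 \<and> w \<in> verts G2},
      (\<lambda>e. Inl ` e) ` edges G1
      \<union> {(\<lambda>w. Inr (v, w)) ` e | v e. v \<in> verts G1 \<and> e \<in> edges G2}
      \<union> {{Inl v, Inr (v, w)} | v w. v \<in> verts G1 \<and> w \<in> verts G2})"

definition edge_label :: "('a \<Rightarrow> int) \<Rightarrow> 'a set \<Rightarrow> int" where
  "edge_label \<alpha> e = (\<Prod>v\<in>e. \<alpha> v)"

definition signed_product_cordial_labeling :: "'a graph \<Rightarrow> ('a \<Rightarrow> int) \<Rightarrow> bool" where
  "signed_product_cordial_labeling G \<alpha> \<longleftrightarrow>
     (\<forall>v\<in>verts G. \<alpha> v = 1 \<or> \<alpha> v = -1) \<and>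
     \<bar>int (card {v\<in>verts G. \<alpha> v = -1}) - int (card {v\<in>verts G. \<alpha> v = 1})\<bar> \<le> 1 \<and>
     \<bar>int (card {e\<in>edges G. edge_label \<alpha> e = -1}) - int (card {e\<in>edges G. edge_label \<alpha> e = 1})\<bar> \<le> 1"

definition signed_product_cordial :: "'a graph \<Rightarrow> bool" where
  "signed_product_cordial G \<longleftrightarrow> (\<exists>\<alpha>. signed_product_cordial_labeling G \<alpha>)"

end

theory Submission
  imports Defs
begin

text \<open>Label every cycle vertex \<open>1\<close> and, in every copy of \<open>3K\<^sub>1\<close>, two pendant vertices \<open>-1\<close>
  and one \<open>1\<close>. Then \<open>2n\<close> vertices carry each label. The \<open>n\<close> cycle edges are labelled \<open>1\<close>,
  and each pendant edge inherits the label of its pendant vertex, so \<open>2n\<close> edges carry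
  each label as well. The only graph-theoretic input is that \<open>C\<^sub>n\<close> has exactly \<open>n\<close>
  edges for \<open>n \<ge> 3\<close>.\<close>

lemma card_edges_cycle_graph:
  assumes "n \<ge> 3"
  shows "card (edges (cycle_graph n)) = n"
proof -
  have "inj_on (\<lambda>i. {i, (i + 1) mod n}) {0..<n}"
  proof (rule inj_onI)
    fix i j
    assume i: "i \<in> {0..<n}" and "j \<in> {0..<n}" and eq: "{i, (i + 1) mod n} = {j, (j + 1) mod n}"
    show "i = j"
    proof (rule ccontr)
      assume "i \<noteq> j"
      with eq have "i = (j + 1) mod n" and "j = (i + 1) mod n"
        by (auto simp: doubleton_eq_iff)
      then have "i = (i + 2) mod n"
        by (metis mod_add_left_eq add_Suc_right one_add_one add.assoc)
      moreover have "i + 2 < n \<or> i + 2 = n \<or> i + 2 = n + 1"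
        using i by auto
      moreover have "(n + 1) mod n = 1"
        using assms by (simp add: mod_Suc)
      ultimately show False
        using assms by auto
    qed
  qed
  moreover have "edges (cycle_graph n) = (\<lambda>i. {i, (i + 1) mod n}) ` {0..<n}"
    by (auto simp: edges_def cycle_graph_def)
  ultimately show ?thesis
    by (simp add: card_image)
qed

lemma verts_corona_empty_graph:
  "verts (corona G (empty_graph m)) = Inl ` verts G \<union> Inr ` (verts G \<times> {0..<m})"
  by (auto simp: corona_def verts_def empty_graph_def)

lemma edges_corona_empty_graph:
  "edges (corona G (empty_graph m)) =
     image Inl ` edges G \<union> (\<lambda>(v, w). {Inl v, Inr (v, w)}) ` (verts G \<times> {0..<m})"
  by (auto simp: corona_def verts_def edges_def empty_graph_def)

definition pendant_labeling :: "('b \<Rightarrow> int) \<Rightarrow> 'a + 'a \<times> 'b \<Rightarrow> int" where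
  "pendant_labeling \<beta> x = (case x of Inl _ \<Rightarrow> 1 | Inr (_, w) \<Rightarrow> \<beta> w)"

lemma edge_label_pendant_labeling_Inl:
  "edge_label (pendant_labeling \<beta>) (Inl ` e) = 1"
  unfolding edge_label_def by (subst prod.reindex) (auto simp: pendant_labeling_def)

lemma edge_label_pendant_labeling_pendant:
  "edge_label (pendant_labeling \<beta>) {Inl v, Inr (v, w)} = \<beta> w"
  by (simp add: edge_label_def pendant_labeling_def)

lemma card_verts_pendant_labeling:
  fixes G :: "'a graph" and \<beta> :: "nat \<Rightarrow> int"
  assumes "finite (verts G)"
  shows "card {x \<in> verts (corona G (empty_graph m)). pendant_labeling \<beta> x = c} =
           (if c = 1 then card (verts G) else 0) + card (verts G) * card {w \<in> {0..<m}. \<beta> w = c}"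
proof -
  define W where "W = {w \<in> {0..<m}. \<beta> w = c}"
  have "{x \<in> verts (corona G (empty_graph m)). pendant_labeling \<beta> x = c} =
          (if c = 1 then Inl ` verts G else {}) \<union> Inr ` (verts G \<times> W)"
    by (auto simp: W_def verts_corona_empty_graph pendant_labeling_def)
  moreover have "finite (Inr ` (verts G \<times> W) :: ('a + 'a \<times> nat) set)"
    using assms by (simp add: W_def)
  moreover have "card (Inr ` (verts G \<times> W) :: ('a + 'a \<times> nat) set) = card (verts G) * card W"
    by (subst card_image) (simp_all add: inj_on_def card_cartesian_product)
  moreover have "card (Inl ` verts G :: ('a + 'a \<times> nat) set) = card (verts G)"
    by (rule card_image) (simp add: inj_on_def)
  moreover have "Inl ` verts G \<inter> (Inr ` (verts G \<times> W) :: ('a + 'a \<times> nat) set) = {}"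
    by auto
  ultimately show ?thesis
    using assms unfolding W_def[symmetric]
    by (cases "c = 1") (simp_all add: card_Un_disjoint)
qed

lemma card_edges_pendant_labeling:
  fixes G :: "'a graph" and \<beta> :: "nat \<Rightarrow> int"
  assumes "finite (verts G)" and "finite (edges G)"
  shows "card {e \<in> edges (corona G (empty_graph m)). edge_label (pendant_labeling \<beta>) e = c} =
           (if c = 1 then card (edges G) else 0) + card (verts G) * card {w \<in> {0..<m}. \<beta> w = c}"
proof -
  define W where "W = {w \<in> {0..<m}. \<beta> w = c}"
  define pendant_edges where "pendant_edges = (\<lambda>(v, w). {Inl v, Inr (v, w)}) ` (verts G \<times> W)"
  have "{e \<in> edges (corona G (empty_graph m)). edge_label (pendant_labeling \<beta>) e = c} =
          (if c = 1 then image Inl ` edges G else {}) \<union> pendant_edges"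
    by (auto simp: W_def pendant_edges_def edges_corona_empty_graph
        edge_label_pendant_labeling_Inl edge_label_pendant_labeling_pendant)
  moreover have "inj_on (\<lambda>(v, w). {Inl v, Inr (v, w)}) (verts G \<times> W)"
    by (auto simp: inj_on_def doubleton_eq_iff)
  then have "finite pendant_edges" and "card pendant_edges = card (verts G) * card W"
    using assms by (simp_all add: W_def pendant_edges_def card_image card_cartesian_product)
  moreover have "card (image Inl ` edges G) = card (edges G)"
    by (rule card_image) (meson inj_Inl inj_image_eq_iff inj_onI)
  moreover have "image Inl ` edges G \<inter> pendant_edges = {}"
    by (auto simp: pendant_edges_def)
  ultimately show ?thesis
    using assms unfolding W_def[symmetric]
    by (cases "c = 1") (simp_all add: card_Un_disjoint)
qed

theorem theorem2p4:
  fixes n :: nat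
  assumes "n \<ge> 3"
  shows "signed_product_cordial (corona (cycle_graph n) (empty_graph 3))"
proof -
  define \<beta> :: "nat \<Rightarrow> int" where "\<beta> w = (if w < 2 then -1 else 1)" for w
  have pattern_neg: "{w \<in> {0..<3}. \<beta> w = -1} = {0, 1}"
    and pattern_pos: "{w \<in> {0..<3}. \<beta> w = 1} = {2}"
    by (auto simp: \<beta>_def)
  have finite: "finite (verts (cycle_graph n))" "finite (edges (cycle_graph n))"
    and card_verts: "card (verts (cycle_graph n)) = n"
    by (simp_all add: verts_def edges_def cycle_graph_def)
  have "signed_product_cordial_labeling (corona (cycle_graph n) (empty_graph 3)) (pendant_labeling \<beta>)"
    unfolding signed_product_cordial_labeling_def
    using card_verts_pendant_labeling[OF finite(1)] card_edges_pendant_labeling[OF finite]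
      card_edges_cycle_graph[OF assms] card_verts pattern_neg pattern_pos
    by (auto simp: verts_corona_empty_graph pendant_labeling_def \<beta>_def)
  then show ?thesis
    unfolding signed_product_cordial_def by blast
qed

end
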